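(* Let $p$ be an odd prime and $\alpha>1$ an integer with $\gcd(p,\alpha)=1$, let $\gamma=\operatorname{ord}_p(\alpha)$, and let $\tau>0$ be the integer with $p^{\tau}\,\|\,\alpha^\gamma-1$. Then for every integer $k\geq 0$, $$\left\{c_{\tau, k}\big((\alpha^b)_p\big) \;\middle|\; 0\leq b < \gamma p^k \right\} = \Lambda_k .$$
   Context: $p^k\,\|\, n$ means $p^k\mid n$ and $p^{k+1}\nmid n$. For a nonnegative integer $m$, $(m)_p$ denotes its base-$p$ representation $m=\sum_{i\ge0}a_ip^i$ with $0\le a_i<p$, viewed as an infinite digit sequence $(a_i)_{i\ge0}$ (padded with zeros). For such a digit sequence $a=(a_i)$ and integers $\tau\ge1,k\ge0$, define $c_{\tau,k}(a)=\langle a_{\tau+k-1},\dots,a_{\tau+1},a_\tau,a_0\rangle$ (a tuple of length $k+1$: the digits in positions $\tau+k-1$ down to $\tau$, followed by the digit in position $0$). Let $\delta=\{\alpha^j \bmod p : j\in\mathbb{Z}\}$ be the set of residues in $\{0,\dots,p-1\}$ generated by $\alpha$ modulo $p$. $\Lambda_k$ is the set of tuples $\langle \sigma_k,\sigma_{k-1},\dots,\sigma_1,\sigma_0\rangle$ with $\sigma_0\in\delta$ and $0\le\sigma_i<p$ integers for $1\le i\le k$. *)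

theory Defs
  imports "HOL-Number_Theory.Number_Theory"
begin

definition digit :: "nat \<Rightarrow> nat \<Rightarrow> nat \<Rightarrow> nat" where
  "digit p m i = (m div p ^ i) mod p"

definition c_tuple :: "nat \<Rightarrow> nat \<Rightarrow> nat \<Rightarrow> nat \<Rightarrow> nat list" where
  "c_tuple p \<tau> k m = map (\<lambda>j. digit p m (\<tau> + k - 1 - j)) [0..<k] @ [digit p m 0]"

text \<open>delta = residues of powers of alpha mod p (alpha is a unit mod p, so
  nonnegative exponents already give all integer powers).\<close>
definition delta :: "nat \<Rightarrow> nat \<Rightarrow> nat set" where
  "delta p \<alpha> = {\<alpha> ^ j mod p | j. True}"

definition Lambda :: "nat \<Rightarrow> nat \<Rightarrow> nat \<Rightarrow> nat list set" where
  "Lambda p \<alpha> k = {xs. length xs = k + 1 \<and> last xs \<in> delta p \<alpha> \<and> (\<forall>i<k. xs ! i < p)}"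

end

theory Submission
  imports Defs
begin

(* The last entry of c_{tau,k}((alpha^b)_p) is alpha^b mod p, which determines b modulo
   gamma = ord_p(alpha) and hence alpha^b modulo p^tau; the remaining entries are the next k
   digits, so the whole tuple determines alpha^b modulo p^(tau+k). Lifting the exponent
   (p odd) shows that p^(tau+j) exactly divides alpha^(gamma p^j) - 1, so alpha has order
   gamma p^k modulo p^(tau+k) and b |-> c_{tau,k}((alpha^b)_p) is injective on
   [0, gamma p^k). Its image lies in Lambda_k, which has exactly p^k |delta| = gamma p^k
   elements. *)

lemma square_dvd_power_minus_linear:
  fixes x :: "'a::comm_ring_1"
  shows "(x - 1)^2 dvd x^n - 1 - of_nat n * (x - 1)"
proof (induction n)
  case (Suc n)
  have "x^Suc n - 1 - of_nat (Suc n) * (x - 1)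
      = x * (x^n - 1 - of_nat n * (x - 1)) + of_nat n * (x - 1)^2"
    by (simp add: algebra_simps power2_eq_square)
  with Suc show ?case by simp
qed simp

lemma geometric_sum_cong_odd:
  fixes x :: int
  assumes "odd n" and "int n dvd x - 1"
  shows "[(\<Sum>i<n. x^i) = int n] (mod int n ^ 2)"
proof -
  obtain h where n: "n = Suc (2 * h)"
    using assms(1) oddE by fastforce
  have "2 * (\<Sum>i<n. int i) = 2 * (int n * int h)"
    using double_gauss_sum[of "2 * h", where 'a = int]
    by (simp add: n lessThan_Suc_atMost atMost_atLeast0 algebra_simps)
  then have gauss: "(\<Sum>i<n. int i) = int n * int h"
    by simp
  have "(\<Sum>i<n. x^i) - int n
      = (\<Sum>i<n. x^i - 1 - int i * (x - 1)) + (x - 1) * (\<Sum>i<n. int i)"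
    by (simp add: sum_subtractf sum.distrib sum_distrib_left algebra_simps)
  moreover have "int n ^ 2 dvd (\<Sum>i<n. x^i - 1 - int i * (x - 1))"
    using square_dvd_power_minus_linear[of x] dvd_power_same[OF assms(2), of 2]
    by (intro dvd_sum) (meson dvd_trans)
  moreover have "int n ^ 2 dvd (x - 1) * (\<Sum>i<n. int i)"
    using assms(2) by (simp add: gauss power2_eq_square mult_dvd_mono)
  ultimately show ?thesis
    by (simp add: cong_iff_dvd_diff)
qed

lemma lifting_the_exponent_step:
  fixes x :: int
  assumes p: "prime p" "odd p" and "t > 0"
    and dvd: "int p ^ t dvd x - 1" and not_dvd: "\<not> int p ^ Suc t dvd x - 1"
  shows "int p ^ Suc t dvd x ^ p - 1" and "\<not> int p ^ Suc (Suc t) dvd x ^ p - 1"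
proof -
  obtain a where a: "x - 1 = int p ^ t * a"
    using dvd by blast
  have a_coprime: "\<not> int p dvd a"
    using not_dvd by (auto simp: a)
  have "int p dvd x - 1"
    using dvd \<open>t > 0\<close> by (meson dvd_power dvd_trans)
  then have "int p ^ 2 dvd (\<Sum>i<p. x^i) - int p"
    using geometric_sum_cong_odd[OF p(2)] by (simp add: cong_iff_dvd_diff)
  then obtain z where "(\<Sum>i<p. x^i) - int p = int p ^ 2 * z" ..
  then have "(\<Sum>i<p. x^i) = int p * (1 + int p * z)"
    by (simp add: algebra_simps power2_eq_square)
  then have "x ^ p - 1 = int p ^ Suc t * (a * (1 + int p * z))"
    by (simp add: power_diff_1_eq[of x p] a)
  moreover have "\<not> int p dvd 1 + int p * z"
    using p(1) by (metis dvd_add_times_triv_right_iff add.commute mult.commute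
        not_prime_unit prime_nat_int_transfer)
  with a_coprime p(1) have "\<not> int p dvd a * (1 + int p * z)"
    by (simp add: prime_dvd_mult_iff)
  ultimately show "int p ^ Suc t dvd x ^ p - 1" and "\<not> int p ^ Suc (Suc t) dvd x ^ p - 1"
    by (auto simp: prime_gt_0_nat[OF p(1)])
qed

lemma lifting_the_exponent:
  fixes x :: nat
  assumes "prime p" "odd p" "t > 0"
    and "[x = 1] (mod p ^ t)" "\<not> [x = 1] (mod p ^ Suc t)"
  shows "[x ^ p ^ j = 1] (mod p ^ (t + j)) \<and> \<not> [x ^ p ^ j = 1] (mod p ^ Suc (t + j))"
proof (induction j)
  case (Suc j)
  have cong_iff: "[y = 1] (mod p ^ e) \<longleftrightarrow> int p ^ e dvd int y - 1" for y e
    by (simp add: cong_int_iff[symmetric] cong_iff_dvd_diff)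
  from Suc show ?case
    using lifting_the_exponent_step[OF assms(1,2), of "t + j" "int (x ^ p ^ j)"] \<open>t > 0\<close>
    unfolding cong_iff by (simp add: power_mult[symmetric] mult.commute)
qed (use assms in simp)

lemma ord_prime_power_modulus:
  fixes p \<alpha> \<tau> k :: nat
  assumes p: "prime p" "odd p" and "coprime p \<alpha>" and "\<tau> > 0"
    and "p ^ \<tau> dvd \<alpha> ^ ord p \<alpha> - 1"
    and "\<not> p ^ (\<tau> + 1) dvd \<alpha> ^ ord p \<alpha> - 1"
  shows "ord (p ^ (\<tau> + k)) \<alpha> = ord p \<alpha> * p ^ k"
proof -
  define g where "g = ord p \<alpha>"
  define n where "n = ord (p ^ (\<tau> + k)) \<alpha>"
  have "g > 0"
    using \<open>coprime p \<alpha>\<close> by (simp add: g_def ord_eq_0)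
  then have "\<alpha> ^ g \<ge> 1"
    using \<open>coprime p \<alpha>\<close> p(1) by (cases "\<alpha> = 0") auto
  with assms(5,6) have "[\<alpha> ^ g = 1] (mod p ^ \<tau>)" and "\<not> [\<alpha> ^ g = 1] (mod p ^ Suc \<tau>)"
    by (simp_all add: g_def cong_altdef_nat)
  from lifting_the_exponent[OF p \<open>\<tau> > 0\<close> this]
  have lifted: "[\<alpha> ^ (g * p ^ j) = 1] (mod p ^ (\<tau> + j))"
    "\<not> [\<alpha> ^ (g * p ^ j) = 1] (mod p ^ Suc (\<tau> + j))" for j
    by (simp_all add: power_mult)
  have "n dvd g * p ^ k"
    using lifted(1)[of k] by (simp add: n_def ord_divides')
  moreover have "g dvd n"
  proof -
    have "[\<alpha> ^ n = 1] (mod p ^ (\<tau> + k))"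
      by (simp add: n_def ord_divides')
    then have "[\<alpha> ^ n = 1] (mod p)"
      by (rule cong_dvd_modulus_nat) (use \<open>\<tau> > 0\<close> in \<open>simp add: dvd_power\<close>)
    then show ?thesis
      by (simp add: g_def ord_divides')
  qed
  ultimately obtain m where "n = g * m" and "m dvd p ^ k"
    using \<open>g > 0\<close> by (metis dvdE nat_mult_dvd_cancel_disj not_gr0)
  then obtain j where "j \<le> k" and n: "n = g * p ^ j"
    by (auto simp: divides_primepow_nat[OF p(1)])
  have "\<not> j < k"
  proof
    assume "j < k"
    have "[\<alpha> ^ (g * p ^ j) = 1] (mod p ^ (\<tau> + k))"
      by (simp add: n[symmetric] n_def ord_divides')
    then have "[\<alpha> ^ (g * p ^ j) = 1] (mod p ^ Suc (\<tau> + j))"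
      by (rule cong_dvd_modulus_nat) (rule le_imp_power_dvd, use \<open>j < k\<close> in simp)
    with lifted(2) show False ..
  qed
  with \<open>j \<le> k\<close> n show ?thesis
    by (simp add: n_def g_def)
qed

lemma cong_power_add_if_digits_eq:
  assumes "[m = m'] (mod p ^ t)"
    and "\<And>i. t \<le> i \<Longrightarrow> i < t + k \<Longrightarrow> digit p m i = digit p m' i"
  shows "[m = m'] (mod p ^ (t + k))"
  using assms(2)
proof (induction k)
  case (Suc k)
  have "n mod p ^ (t + Suc k) = p ^ (t + k) * digit p n (t + k) + n mod p ^ (t + k)" for n :: nat
    by (simp only: power_Suc2 add_Suc_right mod_mult2_eq digit_def)
  with Suc show ?case
    by (simp add: cong_def)
qed (use assms(1) in simp)

lemma c_tuple_eq_imp_cong: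
  assumes "c_tuple p \<tau> k m = c_tuple p \<tau> k m'"
  shows "[m = m'] (mod p)"
  using assms by (simp add: c_tuple_def digit_def cong_def)

lemma c_tuple_eq_imp_cong_power:
  assumes "c_tuple p \<tau> k m = c_tuple p \<tau> k m'" and "[m = m'] (mod p ^ \<tau>)"
  shows "[m = m'] (mod p ^ (\<tau> + k))"
proof (rule cong_power_add_if_digits_eq[OF assms(2)])
  have "map (\<lambda>j. digit p m (\<tau> + k - 1 - j)) [0..<k] = map (\<lambda>j. digit p m' (\<tau> + k - 1 - j)) [0..<k]"
    using assms(1) by (simp add: c_tuple_def)
  then have digits_eq: "digit p m (\<tau> + k - 1 - j) = digit p m' (\<tau> + k - 1 - j)" if "j < k" for j
    using that by (simp add: map_eq_conv)
  fix i assume "\<tau> \<le> i" "i < \<tau> + k"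
  then show "digit p m i = digit p m' i"
    using digits_eq[of "\<tau> + k - 1 - i"] by simp
qed

lemma c_tuple_power_in_Lambda:
  assumes "p > 0"
  shows "c_tuple p \<tau> k (\<alpha> ^ b) \<in> Lambda p \<alpha> k"
proof -
  have "last (c_tuple p \<tau> k (\<alpha> ^ b)) \<in> delta p \<alpha>"
    by (auto simp: c_tuple_def delta_def digit_def)
  moreover have "c_tuple p \<tau> k (\<alpha> ^ b) ! i < p" if "i < k" for i
    using assms that by (simp add: c_tuple_def digit_def nth_append)
  ultimately show ?thesis
    by (simp add: Lambda_def c_tuple_def)
qed

lemma delta_eq_image:
  assumes "coprime p \<alpha>"
  shows "delta p \<alpha> = (\<lambda>j. \<alpha> ^ j mod p) ` {..<ord p \<alpha>}"
proof -
  have "\<alpha> ^ j mod p = \<alpha> ^ (j mod ord p \<alpha>) mod p" for j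
    using order_divides_expdiff[OF assms, of j "j mod ord p \<alpha>"] by (simp add: cong_def)
  moreover have "j mod ord p \<alpha> < ord p \<alpha>" for j
    using assms by (simp add: ord_eq_0)
  ultimately show ?thesis
    unfolding delta_def by (auto intro: rev_image_eqI)
qed

lemma card_delta:
  assumes "coprime p \<alpha>"
  shows "card (delta p \<alpha>) = ord p \<alpha>"
proof -
  have "inj_on (\<lambda>j. \<alpha> ^ j mod p) {..<ord p \<alpha>}"
  proof (rule inj_onI)
    fix i j assume "i \<in> {..<ord p \<alpha>}" "j \<in> {..<ord p \<alpha>}" "\<alpha> ^ i mod p = \<alpha> ^ j mod p"
    then show "i = j"
      using order_divides_expdiff[OF assms, of i j] cong_less_modulus_unique_nat[of i j]
      by (simp add: cong_def)
  qed
  then show ?thesis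
    by (simp add: delta_eq_image[OF assms] card_image)
qed

lemma Lambda_eq_image:
  "Lambda p \<alpha> k =
    (\<lambda>(xs, s). xs @ [s]) ` ({xs. set xs \<subseteq> {..<p} \<and> length xs = k} \<times> delta p \<alpha>)"
proof (intro equalityI subsetI)
  fix ys assume ys: "ys \<in> Lambda p \<alpha> k"
  then have "ys = butlast ys @ [last ys]"
    by (intro append_butlast_last_id[symmetric]) (auto simp: Lambda_def)
  moreover have "set (butlast ys) \<subseteq> {..<p}" "length (butlast ys) = k" "last ys \<in> delta p \<alpha>"
    using ys by (auto simp: Lambda_def in_set_conv_nth nth_butlast)
  ultimately show "ys \<in> (\<lambda>(xs, s). xs @ [s]) ` ({xs. set xs \<subseteq> {..<p} \<and> length xs = k} \<times> delta p \<alpha>)"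
    by (metis (mono_tags, lifting) SigmaI case_prod_conv image_eqI mem_Collect_eq)
qed (auto simp: Lambda_def nth_append subset_iff)

lemma card_Lambda:
  assumes "coprime p \<alpha>"
  shows "card (Lambda p \<alpha> k) = ord p \<alpha> * p ^ k"
proof -
  have "inj_on (\<lambda>(xs, s). xs @ [s]) A" for A :: "(nat list \<times> nat) set"
    by (auto intro: inj_onI)
  then show ?thesis
    by (simp add: Lambda_eq_image card_image card_cartesian_product card_lists_length_eq
        card_delta[OF assms])
qed

lemma inj_on_c_tuple_powers:
  fixes p \<alpha> \<tau> k :: nat
  assumes "prime p" "odd p" and "coprime p \<alpha>" and "\<tau> > 0"
    and "p ^ \<tau> dvd \<alpha> ^ ord p \<alpha> - 1" and "\<not> p ^ (\<tau> + 1) dvd \<alpha> ^ ord p \<alpha> - 1"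
  shows "inj_on (\<lambda>b. c_tuple p \<tau> k (\<alpha> ^ b)) {..<ord p \<alpha> * p ^ k}"
proof (rule inj_onI)
  note ord_eq = ord_prime_power_modulus[OF assms]
  have coprime_power: "coprime (p ^ e) \<alpha>" for e
    using \<open>coprime p \<alpha>\<close> by simp
  fix b b' assume b: "b \<in> {..<ord p \<alpha> * p ^ k}" "b' \<in> {..<ord p \<alpha> * p ^ k}"
    and eq: "c_tuple p \<tau> k (\<alpha> ^ b) = c_tuple p \<tau> k (\<alpha> ^ b')"
  have "[b = b'] (mod ord p \<alpha>)"
    using c_tuple_eq_imp_cong[OF eq] order_divides_expdiff[OF \<open>coprime p \<alpha>\<close>] by blast
  then have "[\<alpha> ^ b = \<alpha> ^ b'] (mod p ^ \<tau>)"
    using order_divides_expdiff[OF coprime_power] ord_eq[of 0] by simp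
  then have "[\<alpha> ^ b = \<alpha> ^ b'] (mod p ^ (\<tau> + k))"
    by (rule c_tuple_eq_imp_cong_power[OF eq])
  then have "[b = b'] (mod ord p \<alpha> * p ^ k)"
    using order_divides_expdiff[OF coprime_power] ord_eq by simp
  with b show "b = b'"
    by (simp add: cong_less_modulus_unique_nat)
qed

theorem theorem2p3:
  fixes p \<alpha> \<tau> k :: nat
  assumes "prime p" and "odd p" and "\<alpha> > 1" and "coprime p \<alpha>"
    and "\<tau> > 0"
    and "p ^ \<tau> dvd \<alpha> ^ ord p \<alpha> - 1"
    and "\<not> p ^ (\<tau> + 1) dvd \<alpha> ^ ord p \<alpha> - 1"
  shows "{c_tuple p \<tau> k (\<alpha> ^ b) | b. b < ord p \<alpha> * p ^ k} = Lambda p \<alpha> k"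
proof -
  let ?N = "ord p \<alpha> * p ^ k" and ?f = "\<lambda>b. c_tuple p \<tau> k (\<alpha> ^ b)"
  have "{c_tuple p \<tau> k (\<alpha> ^ b) | b. b < ?N} = ?f ` {..<?N}"
    by auto
  moreover have "?f ` {..<?N} \<subseteq> Lambda p \<alpha> k"
    using c_tuple_power_in_Lambda prime_gt_0_nat[OF \<open>prime p\<close>] by blast
  moreover have "card (?f ` {..<?N}) = card (Lambda p \<alpha> k)"
    using inj_on_c_tuple_powers[OF assms(1,2,4-7)] card_Lambda[OF \<open>coprime p \<alpha>\<close>]
    by (simp add: card_image)
  moreover have "finite (Lambda p \<alpha> k)"
    using card_Lambda[OF \<open>coprime p \<alpha>\<close>] \<open>coprime p \<alpha>\<close> prime_gt_0_nat[OF \<open>prime p\<close>]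
    by (intro card_ge_0_finite) (simp add: ord_eq_0)
  ultimately show ?thesis
    by (metis card_subset_eq)
qed

end
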